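(* Let $\mathbf w=\mathbf w^{H,\mathbf S_r}_{\mathbf b}$ be a binary subspace chirp of rank $r$ with parameters $H\in\mathcal G(m,r;2)$, $\mathbf S_r\in\mathrm{Sym}(r;2)$, $\mathbf b\in\mathbb F_2^m$. For $\mathbf x,\mathbf y\in\mathbb F_2^m$ we have $\mathbf w^\dagger\mathbf E(\mathbf x,\mathbf y)\mathbf w\neq0$ if and only if $\mathbf x\in H$ and, writing $\mathbf x=\mathbf H_{\mathcal I}\mathbf z$ with $\mathbf z\in\mathbb F_2^r$, one has $\mathbf H_{\mathcal I}^T\mathbf y=\mathbf S_r\mathbf z$; equivalently $\mathbf y\in\{\tilde{\mathbf H}_{\mathcal I}\mathbf v+\mathbf I_{\mathcal I}\mathbf S_r\mathbf z:\mathbf v\in\mathbb F_2^{m-r}\}$. In particular $\mathbf w^\dagger\mathbf E(\mathbf 0,\mathbf y)\mathbf w\neq0$ if and only if $\mathbf y$ lies in the column space of $\tilde{\mathbf H}_{\mathcal I}$, which equals $H^{\perp}=\{\mathbf y:\mathbf y^T\mathbf h=0\ \forall\mathbf h\in H\}$.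
   Context: Fix $m\ge1$, $N=2^m$. Binary vectors are columns over $\mathbb F_2$; $\mathrm{Sym}(r;2)$ is the set of symmetric binary $r\times r$ matrices, $\mathcal G(m,r;2)$ the set of $r$-dimensional subspaces of $\mathbb F_2^m$. The standard basis of $\mathbb C^N=(\mathbb C^2)^{\otimes m}$ is $\{\mathbf e_{\mathbf v}=\mathbf e_{v_1}\otimes\cdots\otimes\mathbf e_{v_m}:\mathbf v\in\mathbb F_2^m\}$ and vectors of $\mathbb C^N$ are indexed by $\mathbb F_2^m$; $\dagger$ is conjugate transpose. Whenever a binary expression appears in an exponent of $i$, binary entries are lifted to the integers $0,1$ and the expression is evaluated in $\mathbb Z$ (equivalently mod 4). Pauli matrices: $\sigma_x=\begin{pmatrix}0&1\\1&0\end{pmatrix}$, $\sigma_z=\begin{pmatrix}1&0\\0&-1\end{pmatrix}$; for $\mathbf a,\mathbf b\in\mathbb F_2^m$, $\mathbf D(\mathbf a,\mathbf b)=\sigma_x^{a_1}\sigma_z^{b_1}\otimes\cdots\otimes\sigma_x^{a_m}\sigma_z^{b_m}$ and $\mathbf E(\mathbf a,\mathbf b)=i^{\mathbf a^T\mathbf b}\mathbf D(\mathbf a,\mathbf b)$. Echelon data: for $0\le r\le m$ and $H\in\mathcal G(m,r;2)$, let $\mathbf H_{\mathcal I}$ be the unique $m\times r$ binary matrix in column reduced echelon form with column space $H$: there are indices $i_1<\dots<i_r$, $\mathcal I=\{i_1,\dots,i_r\}$, such that rows $i_1,\dots,i_r$ of $\mathbf H_{\mathcal I}$ form $\mathbf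 I_r$ and column $j$ of $\mathbf H_{\mathcal I}$ is zero in all rows above row $i_j$. Let $\mathbf I_{\mathcal I}$ (resp. $\mathbf I_{\tilde{\mathcal I}}$) be the $m\times r$ (resp. $m\times(m-r)$) matrix whose columns are the standard basis vectors $\mathbf e_i$ with $i\in\mathcal I$ (resp. $i\notin\mathcal I$), in increasing order of $i$. Put $\mathbf P_{\mathcal I}=[\mathbf H_{\mathcal I}\ \ \mathbf I_{\tilde{\mathcal I}}]\in\mathrm{GL}(m;2)$, and define the $m\times(m-r)$ matrix $\tilde{\mathbf H}_{\mathcal I}$ by $\mathbf P_{\mathcal I}^{-T}=[\mathbf I_{\mathcal I}\ \ \tilde{\mathbf H}_{\mathcal I}]$. (For $r=0$: $H=\{0\}$, $\mathbf P_{\mathcal I}=\mathbf I_m$.) For $\mathbf S_r\in\mathrm{Sym}(r;2)$, $\tilde{\mathbf S}_r\in\mathrm{Sym}(m;2)$ denotes the matrix with $\mathbf S_r$ as its upper-left $r\times r$ block and zeros elsewhere. Binary subspace chirps: let $f(\mathbf v,\mathbf w,r)=\prod_{i=r+1}^m(1+v_i+w_i)$ computed in $\mathbb F_2$ and viewed in $\{0,1\}$ (so $f=1$ iff $\mathbf v,\mathbf w$ agree in their last $m-r$ coordinates). For $\mathbf b\in\mathbb F_2^m$, the binary subspace chirp (BSSC) $\mathbf w_{\mathbf b}=\mathbf w^{H,\mathbf S_r}_{\mathbf b}\in\mathbb C^N$ has entries $\mathbf w_{\mathbf b}(\mathbf a)=2^{-r/2}\,i^{\mathbf u^T\tilde{\mathbf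 S}_r\mathbf u+2\mathbf b^T\mathbf u}\,f(\mathbf b,\mathbf u,r)$ with $\mathbf u=\mathbf P_{\mathcal I}^{-1}\mathbf a\in\mathbb F_2^m$, for $\mathbf a\in\mathbb F_2^m$. The integer $r$ is its rank. *)

theory Defs
  imports Complex_Main "HOL-Library.Z2"
begin

(* Indices are 0-based:
   a vector of F_2^n is a function nat => bit vanishing outside {0..<n};
   an n x k matrix is a function nat => nat => bit (row, column). *)

definition vecs :: "nat \<Rightarrow> (nat \<Rightarrow> bit) set" where
  "vecs n = {v. \<forall>i\<ge>n. v i = 0}"

definition lift :: "bit \<Rightarrow> nat" where
  "lift b = (if b = 1 then 1 else 0)"

definition mvec :: "nat \<Rightarrow> nat \<Rightarrow> (nat \<Rightarrow> nat \<Rightarrow> bit) \<Rightarrow> (nat \<Rightarrow> bit) \<Rightarrow> (nat \<Rightarrow> bit)" where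
  "mvec n k M z = (\<lambda>i. if i < n then (\<Sum>j<k. M i j * z j) else 0)"

definition vadd :: "(nat \<Rightarrow> bit) \<Rightarrow> (nat \<Rightarrow> bit) \<Rightarrow> (nat \<Rightarrow> bit)" where
  "vadd u v = (\<lambda>i. u i + v i)"

definition mtrans :: "(nat \<Rightarrow> nat \<Rightarrow> bit) \<Rightarrow> (nat \<Rightarrow> nat \<Rightarrow> bit)" where
  "mtrans M = (\<lambda>i j. M j i)"

definition mmul :: "nat \<Rightarrow> nat \<Rightarrow> nat \<Rightarrow> (nat \<Rightarrow> nat \<Rightarrow> bit) \<Rightarrow> (nat \<Rightarrow> nat \<Rightarrow> bit) \<Rightarrow> (nat \<Rightarrow> nat \<Rightarrow> bit)" where
  "mmul n k l A B = (\<lambda>i j. if i < n \<and> j < l then (\<Sum>t<k. A i t * B t j) else 0)"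

definition idm :: "nat \<Rightarrow> (nat \<Rightarrow> nat \<Rightarrow> bit)" where
  "idm n = (\<lambda>i j. if i < n \<and> i = j then 1 else 0)"

definition is_mat :: "nat \<Rightarrow> nat \<Rightarrow> (nat \<Rightarrow> nat \<Rightarrow> bit) \<Rightarrow> bool" where
  "is_mat n k M \<longleftrightarrow> (\<forall>i j. (n \<le> i \<or> k \<le> j) \<longrightarrow> M i j = 0)"

definition minv :: "nat \<Rightarrow> (nat \<Rightarrow> nat \<Rightarrow> bit) \<Rightarrow> (nat \<Rightarrow> nat \<Rightarrow> bit)" where
  "minv n A = (THE B. is_mat n n B \<and> mmul n n n A B = idm n \<and> mmul n n n B A = idm n)"

definition colspace :: "nat \<Rightarrow> nat \<Rightarrow> (nat \<Rightarrow> nat \<Rightarrow> bit) \<Rightarrow> (nat \<Rightarrow> bit) set" where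
  "colspace n k M = mvec n k M ` vecs k"

definition bdot :: "nat \<Rightarrow> (nat \<Rightarrow> bit) \<Rightarrow> (nat \<Rightarrow> bit) \<Rightarrow> bit" where
  "bdot n u v = (\<Sum>i<n. u i * v i)"

definition perp :: "nat \<Rightarrow> (nat \<Rightarrow> bit) set \<Rightarrow> (nat \<Rightarrow> bit) set" where
  "perp m H = {y \<in> vecs m. \<forall>h\<in>H. bdot m y h = 0}"

(* M is an m x r binary matrix in column reduced echelon form with pivot rows
   piv 0 < ... < piv (r-1) (0-based version of i_1 < ... < i_r) *)
definition cref :: "nat \<Rightarrow> nat \<Rightarrow> (nat \<Rightarrow> nat \<Rightarrow> bit) \<Rightarrow> (nat \<Rightarrow> nat) \<Rightarrow> bool" where
  "cref m r M piv \<longleftrightarrow> is_mat m r M \<and> r \<le> m \<and>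
     (\<forall>j<r. piv j < m) \<and> (\<forall>j k. j < k \<and> k < r \<longrightarrow> piv j < piv k) \<and>
     (\<forall>j<r. \<forall>k<r. M (piv j) k = (if j = k then 1 else 0)) \<and>
     (\<forall>j<r. \<forall>i<piv j. M i j = 0)"

definition nonpiv :: "nat \<Rightarrow> nat \<Rightarrow> (nat \<Rightarrow> nat) \<Rightarrow> nat \<Rightarrow> nat" where
  "nonpiv m r piv k = sorted_list_of_set ({0..<m} - piv ` {0..<r}) ! k"

definition IImat :: "nat \<Rightarrow> nat \<Rightarrow> (nat \<Rightarrow> nat) \<Rightarrow> (nat \<Rightarrow> nat \<Rightarrow> bit)" where
  "IImat m r piv = (\<lambda>i j. if i < m \<and> j < r \<and> i = piv j then 1 else 0)"

(* P_I = [H_I  I_{~I}] *)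
definition Pmat :: "nat \<Rightarrow> nat \<Rightarrow> (nat \<Rightarrow> nat \<Rightarrow> bit) \<Rightarrow> (nat \<Rightarrow> nat) \<Rightarrow> (nat \<Rightarrow> nat \<Rightarrow> bit)" where
  "Pmat m r M piv = (\<lambda>i j. if i < m \<and> j < m then
       (if j < r then M i j else (if i = nonpiv m r piv (j - r) then 1 else 0)) else 0)"

definition Htil :: "nat \<Rightarrow> nat \<Rightarrow> (nat \<Rightarrow> nat \<Rightarrow> bit) \<Rightarrow> (nat \<Rightarrow> nat) \<Rightarrow> (nat \<Rightarrow> nat \<Rightarrow> bit)" where
  "Htil m r M piv = (\<lambda>i j. if i < m \<and> j < m - r then
       mtrans (minv m (Pmat m r M piv)) i (r + j) else 0)"

definition fagree :: "nat \<Rightarrow> (nat \<Rightarrow> bit) \<Rightarrow> (nat \<Rightarrow> bit) \<Rightarrow> nat \<Rightarrow> complex" where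
  "fagree m v w r = (if \<forall>i. r \<le> i \<and> i < m \<longrightarrow> v i = w i then 1 else 0)"

definition bssc :: "nat \<Rightarrow> nat \<Rightarrow> (nat \<Rightarrow> nat \<Rightarrow> bit) \<Rightarrow> (nat \<Rightarrow> nat) \<Rightarrow> (nat \<Rightarrow> nat \<Rightarrow> bit)
                    \<Rightarrow> (nat \<Rightarrow> bit) \<Rightarrow> (nat \<Rightarrow> bit) \<Rightarrow> complex" where
  "bssc m r M piv S b a =
     (let u = mvec m m (minv m (Pmat m r M piv)) a in
      complex_of_real (2 powr (- real r / 2)) *
      \<i> ^ ((\<Sum>j<r. \<Sum>k<r. lift (u j) * lift (S j k) * lift (u k)) + 2 * (\<Sum>j<m. lift (b j) * lift (u j))) *
      fagree m b u r)"

definition sigx :: "bit \<Rightarrow> bit \<Rightarrow> complex" where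
  "sigx u v = (if u \<noteq> v then 1 else 0)"
definition sigz :: "bit \<Rightarrow> bit \<Rightarrow> complex" where
  "sigz u v = (if u = v then (if u = 0 then 1 else -1) else 0)"
definition id2 :: "bit \<Rightarrow> bit \<Rightarrow> complex" where
  "id2 u v = (if u = v then 1 else 0)"
definition mult2 :: "(bit \<Rightarrow> bit \<Rightarrow> complex) \<Rightarrow> (bit \<Rightarrow> bit \<Rightarrow> complex) \<Rightarrow> (bit \<Rightarrow> bit \<Rightarrow> complex)" where
  "mult2 A B = (\<lambda>u v. A u 0 * B 0 v + A u 1 * B 1 v)"

definition pauli1 :: "bit \<Rightarrow> bit \<Rightarrow> (bit \<Rightarrow> bit \<Rightarrow> complex)" where
  "pauli1 a b = mult2 (if a = 1 then sigx else id2) (if b = 1 then sigz else id2)"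

(* D(a,b) = tensor product, entry (u,v) = prod_i (factor_i)_{u_i, v_i} *)
definition Dmat :: "nat \<Rightarrow> (nat \<Rightarrow> bit) \<Rightarrow> (nat \<Rightarrow> bit) \<Rightarrow> (nat \<Rightarrow> bit) \<Rightarrow> (nat \<Rightarrow> bit) \<Rightarrow> complex" where
  "Dmat m a b u v = (\<Prod>i<m. pauli1 (a i) (b i) (u i) (v i))"

definition Emat :: "nat \<Rightarrow> (nat \<Rightarrow> bit) \<Rightarrow> (nat \<Rightarrow> bit) \<Rightarrow> (nat \<Rightarrow> bit) \<Rightarrow> (nat \<Rightarrow> bit) \<Rightarrow> complex" where
  "Emat m a b u v = \<i> ^ (\<Sum>i<m. lift (a i) * lift (b i)) * Dmat m a b u v"

definition qform :: "nat \<Rightarrow> ((nat \<Rightarrow> bit) \<Rightarrow> complex) \<Rightarrow> ((nat \<Rightarrow> bit) \<Rightarrow> (nat \<Rightarrow> bit) \<Rightarrow> complex) \<Rightarrow> complex" where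
  "qform m w A = (\<Sum>u\<in>vecs m. cnj (w u) * (\<Sum>v\<in>vecs m. A u v * w v))"

end

theory Submission
  imports Defs
begin

(* Substituting a = P_I c turns the chirp into
     W(c) = 2^(-r/2) i^(c^T S c) (-1)^(b^T c) f(b, c, r),
   and (E(x, y) w)(a) = i^(x^T y) (-1)^(y^T (a + x)) w(a + x).  Hence, with x' = P_I^-1 x,
   w^dagger E(x, y) w is, up to a unit, the sum over c of
   cnj (W c) (-1)^(y^T P_I (c + x')) W (c + x').  If x' is not supported on the first r
   coordinates, f vanishes at c or at c + x'.  Otherwise the symmetry of S gives
   i^Q(c + x') = i^Q(c) i^Q(x') (-1)^(c^T S x') for Q(c) = c^T S c, so every summand is a
   fixed nonzero constant times a product of factors each depending on one coordinate c_j,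
   and the sum factorises.  The factor of a coordinate j < r vanishes iff
   (S x')_j <> (P_I^T y)_j = (H_I^T y)_j; the other factors never vanish.  Finally
   P_I^-T = [I_I  ~H_I] decomposes y as I_I H_I^T y + ~H_I v, which describes the solutions
   of H_I^T y = d. *)

declare add_bit_eq_xor[simp del] mult_bit_eq_and[simp del]

lemma UNIV_bit: "(UNIV :: bit set) = {0, 1}"
  by (auto intro: bit.exhaust)

lemma finite_UNIV_bit [simp]: "finite (UNIV :: bit set)"
  by (simp add: UNIV_bit)

lemma bit_add_eq_0_iff: "(a :: bit) + b = 0 \<longleftrightarrow> a = b"
  by (cases a; cases b) simp_all

lemma int_lift_add:
  "int (lift (a + b)) = int (lift a) + int (lift b) - 2 * int (lift a) * int (lift b)"
  by (cases a; cases b) (simp_all add: lift_def)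

lemma lift_mult: "lift (a * b) = lift a * lift b"
  by (cases a; cases b) (simp_all add: lift_def)

definition bsign :: "bit \<Rightarrow> complex" where
  "bsign t = (if t = 1 then -1 else 1)"

lemma bsign_0 [simp]: "bsign 0 = 1" and bsign_1 [simp]: "bsign 1 = -1"
  by (simp_all add: bsign_def)

lemma bsign_nonzero [simp]: "bsign t \<noteq> 0"
  and bsign_mult_self [simp]: "bsign t * bsign t = 1"
  and cnj_bsign [simp]: "cnj (bsign t) = bsign t"
  by (cases t; simp)+

lemma bsign_add: "bsign (a + b) = bsign a * bsign b"
  by (cases a; cases b) simp_all

lemma bsign_sum: "finite A \<Longrightarrow> bsign (\<Sum>j\<in>A. f j) = (\<Prod>j\<in>A. bsign (f j))"
  by (induction A rule: finite_induct) (simp_all add: bsign_add)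

lemma power_neg_one_sum_lift: "(-1 :: complex) ^ (\<Sum>j\<in>A. lift (f j)) = (\<Prod>j\<in>A. bsign (f j))"
proof -
  have "(-1 :: complex) ^ lift t = bsign t" for t
    by (cases t) (simp_all add: lift_def)
  then show ?thesis by (simp add: power_sum)
qed

lemma power_i_eqI:
  assumes "int a = int b + 4 * k"
  shows "\<i> ^ a = \<i> ^ b"
proof -
  have "\<i> ^ n = \<i> ^ (n mod 4)" for n
  proof -
    have "\<i> ^ n = \<i> ^ (4 * (n div 4) + n mod 4)" by simp
    then show ?thesis by (simp only: power_add power_mult) simp
  qed
  moreover have "a mod 4 = b mod 4" using assms by presburger
  ultimately show ?thesis by metis
qed

lemma vecs_0: "vecs 0 = {\<lambda>_. 0}"
  by (auto simp: vecs_def)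

lemma vecs_Suc: "vecs (Suc n) = (\<lambda>(v, t). v(n := t)) ` (vecs n \<times> UNIV)"
proof (rule set_eqI, rule iffI)
  fix c assume c: "c \<in> vecs (Suc n)"
  then have "c(n := 0) \<in> vecs n" by (auto simp: vecs_def)
  then show "c \<in> (\<lambda>(v, t). v(n := t)) ` (vecs n \<times> UNIV)"
    by (intro image_eqI[where x = "(c(n := 0), c n)"]) auto
qed (auto simp: vecs_def)

lemma inj_on_vecs_Suc: "inj_on (\<lambda>(v, t). v(n := t)) (vecs n \<times> UNIV)"
proof (rule inj_onI, clarify)
  fix v t v' t' assume v: "v \<in> vecs n" "v' \<in> vecs n" and eq: "v(n := t) = v'(n := t')"
  have "v i = v' i" for i
    using v fun_cong[OF eq, of i] by (cases "i = n") (simp_all add: vecs_def)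
  then show "v = v' \<and> t = t'" using fun_cong[OF eq, of n] by auto
qed

lemma finite_vecs [simp]: "finite (vecs n)"
  by (induction n) (simp_all add: vecs_0 vecs_Suc)

lemma sum_vecs_prod:
  fixes f :: "nat \<Rightarrow> bit \<Rightarrow> 'a :: comm_ring_1"
  shows "(\<Sum>c\<in>vecs n. \<Prod>j<n. f j (c j)) = (\<Prod>j<n. f j 0 + f j 1)"
proof (induction n)
  case 0
  then show ?case by (simp add: vecs_0)
next
  case (Suc n)
  have "(\<Sum>c\<in>vecs (Suc n). \<Prod>j<Suc n. f j (c j))
      = (\<Sum>(v, t)\<in>vecs n \<times> UNIV. \<Prod>j<Suc n. f j ((v(n := t)) j))"
    unfolding vecs_Suc by (subst sum.reindex[OF inj_on_vecs_Suc]) (simp add: case_prod_beta)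
  also have "\<dots> = (\<Sum>v\<in>vecs n. \<Sum>t\<in>UNIV. (\<Prod>j<n. f j (v j)) * f n t)"
    by (simp add: sum.cartesian_product prod.lessThan_Suc)
  also have "\<dots> = (\<Sum>v\<in>vecs n. \<Prod>j<n. f j (v j)) * (f n 0 + f n 1)"
    by (simp add: UNIV_bit sum_distrib_right sum_distrib_left algebra_simps)
  finally show ?case using Suc by (simp add: prod.lessThan_Suc)
qed

lemma zero_in_vecs [simp]: "(\<lambda>_. 0) \<in> vecs n"
  by (simp add: vecs_def)

lemma mvec_in_vecs [simp]: "mvec n k A v \<in> vecs n"
  by (simp add: vecs_def mvec_def)

lemma vadd_in_vecs: "u \<in> vecs n \<Longrightarrow> v \<in> vecs n \<Longrightarrow> vadd u v \<in> vecs n"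
  by (simp add: vecs_def vadd_def)

lemma vecs_mono: "v \<in> vecs r \<Longrightarrow> r \<le> m \<Longrightarrow> v \<in> vecs m"
  by (simp add: vecs_def)

lemma vecs_eqI:
  assumes "u \<in> vecs r" "v \<in> vecs r" "\<And>j. j < r \<Longrightarrow> u j = v j"
  shows "u = v"
proof
  fix j
  show "u j = v j" using assms by (cases "j < r") (auto simp: vecs_def)
qed

lemma vadd_commute: "vadd u v = vadd v u"
  by (simp add: vadd_def add.commute)

lemma vadd_zero [simp]: "vadd u (\<lambda>_. 0) = u"
  by (simp add: vadd_def)

lemma mvec_zero [simp]: "mvec n k A (\<lambda>_. 0) = (\<lambda>_. 0)"
  by (rule ext) (simp add: mvec_def)

lemma mvec_vadd: "mvec n k A (vadd u v) = vadd (mvec n k A u) (mvec n k A v)"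
  by (auto simp: mvec_def vadd_def fun_eq_iff distrib_left sum.distrib)

lemma mvec_mmul: "mvec n k A (mvec k l B v) = mvec n l (mmul n k l A B) v"
proof -
  have "(\<Sum>t<k. A i t * (\<Sum>s<l. B t s * v s)) = (\<Sum>s<l. (\<Sum>t<k. A i t * B t s) * v s)" for i
  proof -
    have "(\<Sum>t<k. A i t * (\<Sum>s<l. B t s * v s)) = (\<Sum>t<k. \<Sum>s<l. A i t * B t s * v s)"
      by (simp add: sum_distrib_left mult.assoc)
    also have "\<dots> = (\<Sum>s<l. (\<Sum>t<k. A i t * B t s) * v s)"
      by (subst sum.swap) (simp add: sum_distrib_right)
    finally show ?thesis .
  qed
  then show ?thesis
    by (auto simp: mvec_def mmul_def fun_eq_iff intro!: sum.cong)
qed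

lemma mvec_idm: "v \<in> vecs n \<Longrightarrow> mvec n n (idm n) v = v"
proof (rule ext)
  fix i assume v: "v \<in> vecs n"
  have "(\<Sum>j<n. idm n i j * v j) = (\<Sum>j<n. if i = j then v j else 0)" if "i < n"
    using that by (intro sum.cong) (auto simp: idm_def)
  then show "mvec n n (idm n) v i = v i" using v by (auto simp: mvec_def vecs_def)
qed

lemma mvec_inverse: "mmul n n n A B = idm n \<Longrightarrow> v \<in> vecs n \<Longrightarrow> mvec n n A (mvec n n B v) = v"
  by (simp add: mvec_mmul mvec_idm)

definition unit_vec :: "nat \<Rightarrow> nat \<Rightarrow> bit" where
  "unit_vec j = (\<lambda>t. if t = j then 1 else 0)"

lemma unit_vec_in_vecs: "j < n \<Longrightarrow> unit_vec j \<in> vecs n"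
  by (simp add: unit_vec_def vecs_def)

lemma sum_mult_unit_vec: "j < k \<Longrightarrow> (\<Sum>i<k. f i * unit_vec j i) = (f j :: bit)"
  by (subst sum.cong[OF refl, of _ _ "\<lambda>i. if i = j then f i else 0"]) (auto simp: unit_vec_def)

lemma mat_eqI:
  assumes "is_mat n k C" "is_mat n k D"
    and "\<And>j. j < k \<Longrightarrow> mvec n k C (unit_vec j) = mvec n k D (unit_vec j)"
  shows "C = D"
proof (intro ext)
  fix i j
  have column: "mvec n k A (unit_vec j) i = (if i < n \<and> j < k then A i j else 0)" for A
    by (simp add: mvec_def unit_vec_def if_distrib cong: if_cong)
  show "C i j = D i j"
  proof (cases "i < n \<and> j < k")
    case True
    then show ?thesis using column[of C] column[of D] assms(3)[of j] by simp
  next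
    case False
    then show ?thesis using assms(1,2) by (auto simp: is_mat_def)
  qed
qed

lemma mmul_eq_idmI:
  assumes "\<And>v. v \<in> vecs n \<Longrightarrow> mvec n n A (mvec n n B v) = v"
  shows "mmul n n n A B = idm n"
proof (rule mat_eqI[of n n])
  show "is_mat n n (mmul n n n A B)" "is_mat n n (idm n)"
    by (simp_all add: is_mat_def mmul_def idm_def)
  fix j assume "j < n"
  then show "mvec n n (mmul n n n A B) (unit_vec j) = mvec n n (idm n) (unit_vec j)"
    by (simp add: mvec_mmul[symmetric] assms unit_vec_in_vecs mvec_idm)
qed

lemma minv_eqI:
  assumes "is_mat n n B" "mmul n n n A B = idm n" "mmul n n n B A = idm n"
  shows "minv n A = B"
  unfolding minv_def
proof (rule the_equality)
  fix B' assume B': "is_mat n n B' \<and> mmul n n n A B' = idm n \<and> mmul n n n B' A = idm n"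
  show "B' = B"
  proof (rule mat_eqI[of n n])
    fix j assume "j < n"
    then have "mvec n n B' (unit_vec j) = mvec n n B' (mvec n n A (mvec n n B (unit_vec j)))"
      using assms(2) by (simp add: mvec_inverse unit_vec_in_vecs)
    then show "mvec n n B' (unit_vec j) = mvec n n B (unit_vec j)"
      using B' by (simp add: mvec_inverse)
  qed (use assms B' in auto)
qed (use assms in auto)

lemma mtrans_mmul: "mtrans (mmul n k l A B) = mmul l k n (mtrans B) (mtrans A)"
  by (auto simp: mtrans_def mmul_def fun_eq_iff mult.commute)

lemma mtrans_idm: "mtrans (idm n) = idm n"
  by (auto simp: mtrans_def idm_def fun_eq_iff)

lemma bdot_mvec: "bdot n y (mvec n k A z) = (\<Sum>j<k. mvec k n (mtrans A) y j * z j)"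
proof -
  have "bdot n y (mvec n k A z) = (\<Sum>i<n. \<Sum>j<k. y i * A i j * z j)"
    unfolding bdot_def by (intro sum.cong) (auto simp: mvec_def sum_distrib_left mult.assoc)
  also have "\<dots> = (\<Sum>j<k. \<Sum>i<n. y i * A i j * z j)"
    by (rule sum.swap)
  also have "\<dots> = (\<Sum>j<k. mvec k n (mtrans A) y j * z j)"
    by (intro sum.cong) (simp_all add: mvec_def mtrans_def sum_distrib_left mult_ac)
  finally show ?thesis .
qed

lemma sum_lessThan_split:
  fixes r m :: nat
  shows "r \<le> m \<Longrightarrow> (\<Sum>j<m. g j) = (\<Sum>j<r. g j) + (\<Sum>k<m - r. g (r + k))"
proof -
  assume "r \<le> m"
  then have "(\<Sum>j<m. g j) = sum g {0..<r} + sum g {r..<m}"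
    by (simp add: lessThan_atLeast0 sum.atLeastLessThan_concat)
  also have "sum g {r..<m} = (\<Sum>k<m - r. g (r + k))"
    using \<open>r \<le> m\<close> sum.shift_bounds_nat_ivl[of g 0 r "m - r"]
    by (simp add: lessThan_atLeast0 add.commute)
  finally show ?thesis by (simp add: lessThan_atLeast0)
qed

subsection \<open>Characters and Pauli matrices\<close>

definition chi :: "nat \<Rightarrow> (nat \<Rightarrow> bit) \<Rightarrow> (nat \<Rightarrow> bit) \<Rightarrow> complex" where
  "chi n y v = (\<Prod>i<n. bsign (y i * v i))"

lemma chi_nonzero [simp]: "chi n y v \<noteq> 0"
  by (simp add: chi_def)

lemma cnj_chi [simp]: "cnj (chi n y v) = chi n y v"
  by (simp add: chi_def)

lemma chi_mult_self [simp]: "chi n y v * chi n y v = 1"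
  by (simp add: chi_def prod.distrib[symmetric])

lemma chi_vadd: "chi n y (vadd u v) = chi n y u * chi n y v"
  by (simp add: chi_def vadd_def distrib_left bsign_add prod.distrib)

lemma chi_vecs_mono: "v \<in> vecs r \<Longrightarrow> r \<le> m \<Longrightarrow> chi m y v = chi r y v"
  unfolding chi_def by (rule prod.mono_neutral_right) (auto simp: vecs_def)

lemma chi_eq_bsign_bdot: "chi n y v = bsign (bdot n y v)"
  by (simp add: chi_def bdot_def bsign_sum)

lemma chi_mvec: "chi n y (mvec n n A c) = chi n c (mvec n n (mtrans A) y)"
  unfolding chi_eq_bsign_bdot bdot_mvec[of n y n A c] by (simp add: bdot_def mult.commute)

lemma pauli1_eq: "pauli1 a b s t = (if s = t + a then bsign (b * t) else 0)"
  by (cases a; cases b; cases s; cases t)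
     (simp_all add: pauli1_def mult2_def sigx_def sigz_def id2_def)

lemma Dmat_eq:
  assumes "u \<in> vecs m" "x \<in> vecs m" "v \<in> vecs m"
  shows "Dmat m x y u v = (if v = vadd u x then chi m y v else 0)"
proof (cases "v = vadd u x")
  case True
  then have "u i = v i + x i" for i by (simp add: vadd_def add.assoc)
  then show ?thesis using True by (simp add: Dmat_def pauli1_eq chi_def)
next
  case False
  then obtain i where i: "v i \<noteq> u i + x i" by (auto simp: vadd_def)
  have "i < m"
  proof (rule ccontr)
    assume "\<not> i < m"
    then show False using assms i by (simp add: vecs_def)
  qed
  moreover have "u i \<noteq> v i + x i"
    using i by (cases "u i"; cases "v i"; cases "x i") simp_all
  ultimately have "Dmat m x y u v = 0"
    unfolding Dmat_def by (intro prod_zero) (auto simp: pauli1_eq)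
  then show ?thesis using False by simp
qed

lemma qform_Emat:
  assumes x: "x \<in> vecs m" and y: "y \<in> vecs m"
  shows "qform m w (Emat m x y) = \<i> ^ (\<Sum>i<m. lift (x i) * lift (y i)) *
           (\<Sum>u\<in>vecs m. cnj (w u) * (chi m y (vadd u x) * w (vadd u x)))"
proof -
  have "(\<Sum>v\<in>vecs m. Emat m x y u v * w v)
      = \<i> ^ (\<Sum>i<m. lift (x i) * lift (y i)) * (chi m y (vadd u x) * w (vadd u x))"
    if u: "u \<in> vecs m" for u
    using u x vadd_in_vecs[OF u x]
    by (simp add: Emat_def Dmat_eq if_distrib[of "\<lambda>z. _ * z * _"] sum.delta' cong: if_cong)
  then show ?thesis
    unfolding qform_def by (simp add: sum_distrib_left mult.left_commute cong: sum.cong)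
qed

subsection \<open>The quadratic phase\<close>

definition quad :: "nat \<Rightarrow> (nat \<Rightarrow> nat \<Rightarrow> bit) \<Rightarrow> (nat \<Rightarrow> bit) \<Rightarrow> nat" where
  "quad r S c = (\<Sum>j<r. \<Sum>k<r. lift (c j) * lift (S j k) * lift (c k))"

lemma int_quad_vadd:
  fixes c x :: "nat \<Rightarrow> bit"
  assumes sym: "\<forall>j<r. \<forall>k<r. S j k = S k j"
  defines "L \<equiv> \<lambda>j. lift (c j)" and "X \<equiv> \<lambda>j. lift (x j)" and "T \<equiv> \<lambda>j k. lift (S j k)"
  shows "int (quad r S (vadd c x)) = int (quad r S c) + int (quad r S x)
           + 2 * int (\<Sum>j<r. \<Sum>k<r. L j * T j k * X k)
           + 4 * (int (\<Sum>j<r. \<Sum>k<r. T j k * L j * X j * L k * X k)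
                  - int (\<Sum>j<r. \<Sum>k<r. T j k * L j * X j * (L k + X k)))"
proof -
  \<comment> \<open>the two mixed terms of the expansion are swapped by the symmetry of S\<close>
  have swap: "(\<Sum>j<r. \<Sum>k<r. f j k) = (\<Sum>j<r. \<Sum>k<r. f k j)" for f :: "nat \<Rightarrow> nat \<Rightarrow> nat"
    by (rule sum.swap)
  have B: "(\<Sum>j<r. \<Sum>k<r. X j * T j k * L k) = (\<Sum>j<r. \<Sum>k<r. L j * T j k * X k)"
    by (subst swap) (use sym in \<open>auto simp: T_def mult_ac intro!: sum.cong\<close>)
  have D: "(\<Sum>j<r. \<Sum>k<r. T j k * L k * X k * (L j + X j))
      = (\<Sum>j<r. \<Sum>k<r. T j k * L j * X j * (L k + X k))"
    by (subst swap) (use sym in \<open>auto simp: T_def intro!: sum.cong\<close>)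
  have pointwise: "int (lift (vadd c x j) * T j k * lift (vadd c x k))
     = int (L j * T j k * L k) + int (X j * T j k * X k)
       + int (L j * T j k * X k) + int (X j * T j k * L k)
       - 2 * int (T j k * L j * X j * (L k + X k))
       - 2 * int (T j k * L k * X k * (L j + X j))
       + 4 * int (T j k * L j * X j * L k * X k)" for j k
    by (simp add: vadd_def int_lift_add L_def X_def algebra_simps)
  have "int (quad r S (vadd c x)) = int (quad r S c) + int (quad r S x)
     + int (\<Sum>j<r. \<Sum>k<r. L j * T j k * X k) + int (\<Sum>j<r. \<Sum>k<r. X j * T j k * L k)
     - 2 * int (\<Sum>j<r. \<Sum>k<r. T j k * L j * X j * (L k + X k))
     - 2 * int (\<Sum>j<r. \<Sum>k<r. T j k * L k * X k * (L j + X j))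
     + 4 * int (\<Sum>j<r. \<Sum>k<r. T j k * L j * X j * L k * X k)"
    unfolding quad_def of_nat_sum pointwise[unfolded T_def]
    by (simp only: L_def X_def T_def sum.distrib sum_subtractf sum_distrib_left)
  then show ?thesis unfolding B D by (simp add: algebra_simps)
qed

lemma power_i_quad_vadd:
  assumes sym: "\<forall>j<r. \<forall>k<r. S j k = S k j"
  shows "\<i> ^ quad r S (vadd c x) = \<i> ^ quad r S c * \<i> ^ quad r S x * chi r c (mvec r r S x)"
proof -
  let ?B = "\<Sum>j<r. \<Sum>k<r. lift (c j) * lift (S j k) * lift (x k)"
    and ?C = "\<Sum>j<r. \<Sum>k<r. lift (S j k) * lift (c j) * lift (x j) * lift (c k) * lift (x k)"
    and ?D = "\<Sum>j<r. \<Sum>k<r. lift (S j k) * lift (c j) * lift (x j) * (lift (c k) + lift (x k))"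
  have "int (quad r S (vadd c x)) = int (quad r S c + quad r S x + 2 * ?B) + 4 * (int ?C - int ?D)"
    using int_quad_vadd[OF sym, of c x] by simp
  then have "\<i> ^ quad r S (vadd c x) = \<i> ^ (quad r S c + quad r S x + 2 * ?B)"
    by (rule power_i_eqI)
  moreover have "(-1 :: complex) ^ ?B = (\<Prod>j<r. (-1) ^ (\<Sum>k<r. lift (c j * S j k * x k)))"
    by (simp add: power_sum lift_mult)
  moreover have "\<dots> = (\<Prod>j<r. \<Prod>k<r. bsign (c j * S j k * x k))"
    by (simp only: power_neg_one_sum_lift)
  moreover have "\<dots> = chi r c (mvec r r S x)"
    by (simp add: chi_def mvec_def bsign_sum sum_distrib_left mult.assoc)
  ultimately show ?thesis by (simp add: power_add power_mult)
qed

lemma perp_colspace: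
  "perp n (colspace n k A) = {y \<in> vecs n. mvec k n (mtrans A) y = (\<lambda>_. 0)}"
proof (intro set_eqI iffI)
  fix y assume y: "y \<in> perp n (colspace n k A)"
  have "mvec k n (mtrans A) y j = 0" for j
  proof (cases "j < k")
    case True
    then have "bdot n y (mvec n k A (unit_vec j)) = 0"
      using y unit_vec_in_vecs[OF True] by (auto simp: perp_def colspace_def)
    then show ?thesis using True by (simp add: bdot_mvec sum_mult_unit_vec)
  next
    case False
    then show ?thesis by (simp add: mvec_def)
  qed
  then show "y \<in> {y \<in> vecs n. mvec k n (mtrans A) y = (\<lambda>_. 0)}"
    using y by (auto simp: perp_def)
qed (auto simp: perp_def colspace_def bdot_mvec)

subsection \<open>The chirp in the coordinates c = P_I^-1 a\<close>

definition chirp_coord ::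
    "nat \<Rightarrow> nat \<Rightarrow> (nat \<Rightarrow> nat \<Rightarrow> bit) \<Rightarrow> (nat \<Rightarrow> bit) \<Rightarrow> (nat \<Rightarrow> bit) \<Rightarrow> complex" where
  "chirp_coord m r S b c =
     complex_of_real (2 powr (- real r / 2)) * \<i> ^ quad r S c * chi m b c * fagree m b c r"

lemma power_i_double_lift_sum: "\<i> ^ (2 * (\<Sum>j<m. lift (b j) * lift (c j))) = chi m b c"
  by (simp add: power_mult lift_mult[symmetric] power_neg_one_sum_lift chi_def)

lemma fagree_eq_prod: "fagree m b c r = (\<Prod>j<m. if r \<le> j \<and> b j \<noteq> c j then 0 else 1)"
proof (cases "\<forall>i. r \<le> i \<and> i < m \<longrightarrow> b i = c i")
  case True
  then show ?thesis by (auto simp: fagree_def intro!: prod.neutral[symmetric] prod.neutral)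
next
  case False
  then obtain i where "r \<le> i" "i < m" "b i \<noteq> c i" by auto
  then show ?thesis by (auto simp: fagree_def intro!: prod_zero[symmetric] bexI[of _ i])
qed

lemma cnj_fagree [simp]: "cnj (fagree m b c r) = fagree m b c r"
  and fagree_mult_self [simp]: "fagree m b c r * fagree m b c r = fagree m b c r"
  by (simp_all add: fagree_def)

lemma fagree_vadd: "x \<in> vecs r \<Longrightarrow> fagree m b (vadd c x) r = fagree m b c r"
  by (auto simp: fagree_def vadd_def vecs_def)

lemma fagree_vadd_eq_0:
  assumes "x \<in> vecs m" "x \<notin> vecs r"
  shows "fagree m b c r = 0 \<or> fagree m b (vadd c x) r = 0"
proof -
  obtain j where j: "r \<le> j" "x j = 1" using assms(2) by (auto simp: vecs_def)
  have "j < m"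
  proof (rule ccontr)
    assume "\<not> j < m"
    then show False using assms(1) j by (simp add: vecs_def)
  qed
  with j show ?thesis by (cases "b j"; cases "c j") (auto simp: fagree_def vadd_def)
qed

definition coord_factor :: "nat \<Rightarrow> (nat \<Rightarrow> bit) \<Rightarrow> (nat \<Rightarrow> bit) \<Rightarrow> nat \<Rightarrow> bit \<Rightarrow> complex" where
  "coord_factor r b e j t = bsign (t * e j) * (if r \<le> j \<and> b j \<noteq> t then 0 else 1)"

lemma coord_factor_sum_nonzero_iff:
  "coord_factor r b e j 0 + coord_factor r b e j 1 \<noteq> 0 \<longleftrightarrow> (j < r \<longrightarrow> e j = 0)"
  by (cases "b j"; cases "e j") (auto simp: coord_factor_def)

lemma prod_coord_factor_nonzero_iff:
  "r \<le> m \<Longrightarrow> (\<Prod>j<m. coord_factor r b e j 0 + coord_factor r b e j 1) \<noteq> 0 \<longleftrightarrow> (\<forall>j<r. e j = 0)"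
  by (auto simp: coord_factor_sum_nonzero_iff)

lemma chirp_coord_summand_eq_0:
  "x \<in> vecs m \<Longrightarrow> x \<notin> vecs r \<Longrightarrow> cnj (chirp_coord m r S b c) * (z * chirp_coord m r S b (vadd c x)) = 0"
  using fagree_vadd_eq_0[of x m r b c] by (auto simp: chirp_coord_def)

lemma chirp_coord_summand:
  assumes sym: "\<forall>j<r. \<forall>k<r. S j k = S k j" and "r \<le> m" and x: "x \<in> vecs r"
  defines "s \<equiv> complex_of_real (2 powr (- real r / 2))"
  shows "cnj (chirp_coord m r S b c) * (chi m y (mvec m m A (vadd c x)) * chirp_coord m r S b (vadd c x))
       = (s * s * \<i> ^ quad r S x * chi m y (mvec m m A x) * chi m b x)
         * (\<Prod>j<m. coord_factor r b (vadd (mvec r r S x) (mvec m m (mtrans A) y)) j (c j))"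
proof -
  let ?F = "fagree m b c r" and ?Sx = "chi m c (mvec r r S x)" and ?Ay = "chi m c (mvec m m (mtrans A) y)"
  have W: "cnj (chirp_coord m r S b c) = s * cnj (\<i> ^ quad r S c) * chi m b c * ?F"
    by (simp add: chirp_coord_def s_def)
  have W': "chirp_coord m r S b (vadd c x)
      = s * (\<i> ^ quad r S c * \<i> ^ quad r S x * ?Sx) * (chi m b c * chi m b x) * ?F"
    using power_i_quad_vadd[OF sym, of c x] chi_vecs_mono[OF mvec_in_vecs \<open>r \<le> m\<close>, of c r S x]
    by (simp add: chirp_coord_def s_def chi_vadd fagree_vadd[OF x])
  have ch: "chi m y (mvec m m A (vadd c x)) = ?Ay * chi m y (mvec m m A x)"
    by (simp add: mvec_vadd chi_vadd chi_mvec[of m y A c])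
  have factors: "(\<Prod>j<m. coord_factor r b (vadd (mvec r r S x) (mvec m m (mtrans A) y)) j (c j))
      = ?Sx * ?Ay * ?F"
    by (simp add: coord_factor_def fagree_eq_prod chi_def vadd_def distrib_left bsign_add prod.distrib)
  have i_unit: "cnj (\<i> ^ quad r S c) * \<i> ^ quad r S c = 1"
    by (simp add: power_mult_distrib[symmetric])
  have "cnj (chirp_coord m r S b c) * (chi m y (mvec m m A (vadd c x)) * chirp_coord m r S b (vadd c x))
      = (cnj (\<i> ^ quad r S c) * \<i> ^ quad r S c) * (chi m b c * chi m b c) * (?F * ?F)
        * (s * s * \<i> ^ quad r S x * chi m y (mvec m m A x) * chi m b x) * (?Sx * ?Ay)"
    unfolding W W' ch by (simp only: ac_simps)
  then show ?thesis unfolding factors i_unit by (simp only: chi_mult_self fagree_mult_self ac_simps mult_1_left)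
qed

subsection \<open>The matrix P_I and its inverse\<close>

locale cref_matrix =
  fixes m r :: nat and M :: "nat \<Rightarrow> nat \<Rightarrow> bit" and piv :: "nat \<Rightarrow> nat"
  assumes cref: "cref m r M piv"
begin

lemma r_le_m: "r \<le> m"
  using cref by (simp add: cref_def)

lemma piv_less: "j < r \<Longrightarrow> piv j < m"
  using cref by (simp add: cref_def)

lemma M_piv: "j < r \<Longrightarrow> k < r \<Longrightarrow> M (piv j) k = (if j = k then 1 else 0)"
  using cref by (simp add: cref_def)

lemma inj_on_piv: "inj_on piv {0..<r}"
  using cref unfolding cref_def by (intro inj_onI) (metis atLeastLessThan_iff less_irrefl linorder_neqE_nat)

definition nonpivots :: "nat set" where
  "nonpivots = {0..<m} - piv ` {0..<r}"

abbreviation npiv :: "nat \<Rightarrow> nat" where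
  "npiv \<equiv> nonpiv m r piv"

lemma npiv_nth: "npiv k = sorted_list_of_set nonpivots ! k"
  by (simp add: nonpiv_def nonpivots_def)

lemma length_sorted_nonpivots: "length (sorted_list_of_set nonpivots) = m - r"
proof -
  have "piv ` {0..<r} \<subseteq> {0..<m}" using piv_less by auto
  then have "card nonpivots = m - card (piv ` {0..<r})"
    unfolding nonpivots_def by (simp add: card_Diff_subset finite_subset)
  then show ?thesis using inj_on_piv by (simp add: card_image)
qed

lemma npiv_in_nonpivots: "k < m - r \<Longrightarrow> npiv k \<in> nonpivots"
  using length_sorted_nonpivots by (metis npiv_nth nth_mem nonpivots_def finite_Diff
      finite_atLeastLessThan set_sorted_list_of_set)

lemma npiv_less: "k < m - r \<Longrightarrow> npiv k < m"
  using npiv_in_nonpivots by (auto simp: nonpivots_def)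

lemma npiv_neq_piv: "k < m - r \<Longrightarrow> j < r \<Longrightarrow> npiv k \<noteq> piv j"
  using npiv_in_nonpivots[of k] by (fastforce simp: nonpivots_def)

lemma npiv_inj: "k < m - r \<Longrightarrow> k' < m - r \<Longrightarrow> npiv k = npiv k' \<Longrightarrow> k = k'"
  using length_sorted_nonpivots
  by (metis npiv_nth nth_eq_iff_index_eq distinct_sorted_list_of_set)

lemma piv_or_npiv:
  assumes "i < m"
  obtains j where "j < r" "i = piv j" | k where "k < m - r" "i = npiv k"
proof (cases "i \<in> nonpivots")
  case True
  have "finite nonpivots" by (simp add: nonpivots_def)
  with True obtain k where "k < m - r" "sorted_list_of_set nonpivots ! k = i"
    using length_sorted_nonpivots by (metis in_set_conv_nth set_sorted_list_of_set)
  then show ?thesis using that by (simp add: npiv_nth)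
next
  case False
  then show ?thesis using assms that by (auto simp: nonpivots_def)
qed

abbreviation Pm :: "nat \<Rightarrow> nat \<Rightarrow> bit" where
  "Pm \<equiv> Pmat m r M piv"

(* Since row piv l of H_I is the l-th unit row, a = P_I c gives c_l = a_(piv l) for l < r
   and a_(npiv k) = (row npiv k of H_I) . (c_0, ..., c_(r-1)) + c_(r+k). *)
definition Pinv :: "nat \<Rightarrow> nat \<Rightarrow> bit" where
  "Pinv t i = (if t < m \<and> i < m then
      (if t < r then (if i = piv t then 1 else 0)
       else (if i = npiv (t - r) then 1 else 0)
            + (\<Sum>l<r. M (npiv (t - r)) l * (if i = piv l then 1 else 0)))
    else 0)"

lemma mvec_Pm:
  assumes "i < m"
  shows "mvec m m Pm c i = (\<Sum>j<r. M i j * c j) + (\<Sum>k<m - r. (if i = npiv k then 1 else 0) * c (r + k))"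
proof -
  have "Pm i j = M i j" if "j < r" for j using assms that r_le_m by (simp add: Pmat_def)
  moreover have "Pm i (r + k) = (if i = npiv k then 1 else 0)" if "k < m - r" for k
    using assms that by (auto simp: Pmat_def)
  ultimately show ?thesis using assms by (simp add: mvec_def sum_lessThan_split[OF r_le_m])
qed

lemma mvec_Pm_piv: "j < r \<Longrightarrow> mvec m m Pm c (piv j) = c j"
proof -
  assume j: "j < r"
  have "(\<Sum>l<r. M (piv j) l * c l) = (\<Sum>l<r. if j = l then c l else 0)"
    using j by (intro sum.cong) (auto simp: M_piv)
  moreover have "(\<Sum>k<m - r. (if piv j = npiv k then 1 else 0) * c (r + k)) = 0"
    using npiv_neq_piv j by (intro sum.neutral) fastforce
  ultimately show ?thesis using j piv_less by (simp add: mvec_Pm)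
qed

lemma mvec_Pm_npiv:
  "k < m - r \<Longrightarrow> mvec m m Pm c (npiv k) = (\<Sum>j<r. M (npiv k) j * c j) + c (r + k)"
proof -
  assume k: "k < m - r"
  have "(\<Sum>k'<m - r. (if npiv k = npiv k' then 1 else 0) * c (r + k'))
      = (\<Sum>k'<m - r. if k = k' then c (r + k') else 0)"
    using npiv_inj k by (intro sum.cong) auto
  then show ?thesis using k npiv_less by (simp add: mvec_Pm)
qed

lemma mvec_Pinv_less: "t < r \<Longrightarrow> mvec m m Pinv a t = a (piv t)"
proof -
  assume t: "t < r"
  have "(\<Sum>i<m. Pinv t i * a i) = (\<Sum>i<m. if piv t = i then a i else 0)"
    using t r_le_m by (intro sum.cong) (auto simp: Pinv_def)
  then show ?thesis using t r_le_m piv_less by (simp add: mvec_def)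
qed

lemma mvec_Pinv_add:
  "k < m - r \<Longrightarrow> mvec m m Pinv a (r + k) = a (npiv k) + (\<Sum>l<r. M (npiv k) l * a (piv l))"
proof -
  assume k: "k < m - r"
  have "Pinv (r + k) i * a i = (if npiv k = i then a i else 0)
          + (\<Sum>l<r. if piv l = i then M (npiv k) l * a (piv l) else 0)" if "i < m" for i
    using that k by (auto simp: Pinv_def distrib_right sum_distrib_right intro!: sum.cong)
  then have "(\<Sum>i<m. Pinv (r + k) i * a i)
      = a (npiv k) + (\<Sum>i<m. \<Sum>l<r. if piv l = i then M (npiv k) l * a (piv l) else 0)"
    using k npiv_less by (simp add: sum.distrib)
  also have "(\<Sum>i<m. \<Sum>l<r. if piv l = i then M (npiv k) l * a (piv l) else 0)
      = (\<Sum>l<r. M (npiv k) l * a (piv l))"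
    by (subst sum.swap) (simp add: piv_less sum.delta)
  finally show ?thesis using k by (auto simp: mvec_def)
qed

lemma Pm_Pinv: "a \<in> vecs m \<Longrightarrow> mvec m m Pm (mvec m m Pinv a) = a"
proof (rule ext)
  fix i assume a: "a \<in> vecs m"
  show "mvec m m Pm (mvec m m Pinv a) i = a i"
  proof (cases "i < m")
    case True
    then show ?thesis
    proof (cases rule: piv_or_npiv)
      case (1 j)
      then show ?thesis by (simp add: mvec_Pm_piv mvec_Pinv_less)
    next
      case (2 k)
      have "(\<Sum>j<r. M (npiv k) j * mvec m m Pinv a j) = (\<Sum>j<r. M (npiv k) j * a (piv j))"
        by (simp add: mvec_Pinv_less)
      then show ?thesis using 2 by (simp add: mvec_Pm_npiv mvec_Pinv_add add.assoc)
    qed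
  qed (use a in \<open>simp add: mvec_def vecs_def\<close>)
qed

lemma Pinv_Pm: "c \<in> vecs m \<Longrightarrow> mvec m m Pinv (mvec m m Pm c) = c"
proof (rule ext)
  fix t assume c: "c \<in> vecs m"
  show "mvec m m Pinv (mvec m m Pm c) t = c t"
  proof (cases "t < r")
    case True
    then show ?thesis by (simp add: mvec_Pm_piv mvec_Pinv_less)
  next
    case False
    show ?thesis
    proof (cases "t < m")
      case True
      with False obtain k where k: "k < m - r" "t = r + k"
        by (metis add_diff_inverse_nat diff_less_mono not_less)
      have "(\<Sum>l<r. M (npiv k) l * mvec m m Pm c (piv l)) = (\<Sum>l<r. M (npiv k) l * c l)"
        by (simp add: mvec_Pm_piv)
      then show ?thesis using k by (simp add: mvec_Pm_npiv mvec_Pinv_add add.assoc[symmetric])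
    qed (use c in \<open>simp add: mvec_def vecs_def\<close>)
  qed
qed

lemma Pm_mmul_Pinv: "mmul m m m Pm Pinv = idm m"
  by (rule mmul_eq_idmI) (rule Pm_Pinv)

lemma Pinv_mmul_Pm: "mmul m m m Pinv Pm = idm m"
  by (rule mmul_eq_idmI) (rule Pinv_Pm)

lemma minv_Pm: "minv m Pm = Pinv"
  by (rule minv_eqI[OF _ Pm_mmul_Pinv Pinv_mmul_Pm]) (simp add: is_mat_def Pinv_def)

lemma mtrans_Pm_Pinv: "d \<in> vecs m \<Longrightarrow> mvec m m (mtrans Pm) (mvec m m (mtrans Pinv) d) = d"
  by (rule mvec_inverse) (metis Pinv_mmul_Pm mtrans_mmul mtrans_idm)

lemma mtrans_Pinv_Pm: "d \<in> vecs m \<Longrightarrow> mvec m m (mtrans Pinv) (mvec m m (mtrans Pm) d) = d"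
  by (rule mvec_inverse) (metis Pm_mmul_Pinv mtrans_mmul mtrans_idm)

lemma mvec_mtrans_Pm_less: "j < r \<Longrightarrow> mvec m m (mtrans Pm) y j = mvec r m (mtrans M) y j"
  using r_le_m by (auto simp: mvec_def mtrans_def Pmat_def intro!: sum.cong)

abbreviation Ht :: "nat \<Rightarrow> nat \<Rightarrow> bit" where
  "Ht \<equiv> Htil m r M piv"

abbreviation II :: "nat \<Rightarrow> nat \<Rightarrow> bit" where
  "II \<equiv> IImat m r piv"

lemma mvec_mtrans_Pinv:
  "mvec m m (mtrans Pinv) d = vadd (mvec m r II (\<lambda>j. if j < r then d j else 0))
                                  (mvec m (m - r) Ht (\<lambda>k. if k < m - r then d (r + k) else 0))"
proof (rule ext)
  fix i
  show "mvec m m (mtrans Pinv) d i = vadd (mvec m r II (\<lambda>j. if j < r then d j else 0))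
          (mvec m (m - r) Ht (\<lambda>k. if k < m - r then d (r + k) else 0)) i"
  proof (cases "i < m")
    case True
    have "(\<Sum>t<r. Pinv t i * d t) = (\<Sum>j<r. II i j * (if j < r then d j else 0))"
      using True r_le_m by (intro sum.cong) (auto simp: Pinv_def IImat_def)
    moreover have "(\<Sum>k<m - r. Pinv (r + k) i * d (r + k))
        = (\<Sum>k<m - r. Ht i k * (if k < m - r then d (r + k) else 0))"
      using True by (intro sum.cong) (auto simp: Htil_def minv_Pm mtrans_def)
    ultimately show ?thesis
      using True by (simp add: mvec_def vadd_def mtrans_def sum_lessThan_split[OF r_le_m])
  qed (simp add: mvec_def vadd_def)
qed

lemma mvec_mtrans_M_eq_iff:
  assumes y: "y \<in> vecs m" and d: "d \<in> vecs r"
  shows "mvec r m (mtrans M) y = d \<longleftrightarrow> (\<exists>v\<in>vecs (m - r). y = vadd (mvec m (m - r) Ht v) (mvec m r II d))"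
proof
  assume h: "mvec r m (mtrans M) y = d"
  define e where "e = mvec m m (mtrans Pm) y"
  have "(\<lambda>j. if j < r then e j else 0) = d"
    using d h by (auto simp: e_def mvec_mtrans_Pm_less vecs_def)
  moreover have "y = mvec m m (mtrans Pinv) e"
    using mtrans_Pinv_Pm[OF y] by (simp add: e_def)
  moreover have "(\<lambda>k. if k < m - r then e (r + k) else 0) \<in> vecs (m - r)"
    by (simp add: vecs_def)
  ultimately show "\<exists>v\<in>vecs (m - r). y = vadd (mvec m (m - r) Ht v) (mvec m r II d)"
    by (metis mvec_mtrans_Pinv vadd_commute)
next
  assume "\<exists>v\<in>vecs (m - r). y = vadd (mvec m (m - r) Ht v) (mvec m r II d)"
  then obtain v where v: "v \<in> vecs (m - r)" and y_eq: "y = vadd (mvec m (m - r) Ht v) (mvec m r II d)"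
    by blast
  define e where "e = (\<lambda>j. if j < r then d j else if j < m then v (j - r) else 0)"
  have "e \<in> vecs m" using r_le_m by (simp add: e_def vecs_def)
  moreover have "y = mvec m m (mtrans Pinv) e"
  proof -
    have "(\<lambda>j. if j < r then e j else 0) = d" "(\<lambda>k. if k < m - r then e (r + k) else 0) = v"
      using d v by (auto simp: e_def vecs_def)
    then show ?thesis using y_eq by (simp add: mvec_mtrans_Pinv vadd_commute)
  qed
  ultimately have "mvec m m (mtrans Pm) y = e" by (simp add: mtrans_Pm_Pinv)
  then show "mvec r m (mtrans M) y = d"
    using d by (intro vecs_eqI) (auto simp: e_def simp flip: mvec_mtrans_Pm_less)
qed

lemma colspace_Htil: "colspace m (m - r) Ht = {y \<in> vecs m. mvec r m (mtrans M) y = (\<lambda>_. 0)}"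
  using mvec_mtrans_M_eq_iff[of _ "\<lambda>_. 0"] by (auto simp: colspace_def)

lemma mvec_Pm_vecs: "z \<in> vecs r \<Longrightarrow> mvec m m Pm z = mvec m r M z"
proof (rule ext)
  fix i assume z: "z \<in> vecs r"
  show "mvec m m Pm z i = mvec m r M z i"
  proof (cases "i < m")
    case True
    have "(\<Sum>k<m - r. (if i = npiv k then 1 else 0) * z (r + k)) = 0"
      using z by (intro sum.neutral) (auto simp: vecs_def)
    then have "mvec m m Pm z i = (\<Sum>j<r. M i j * z j)" by (simp add: mvec_Pm[OF True])
    then show ?thesis using True by (simp add: mvec_def)
  qed (simp add: mvec_def)
qed

lemma colspace_M_iff:
  assumes x: "x \<in> vecs m"
  shows "(x \<in> colspace m r M \<and> (\<exists>z\<in>vecs r. x = mvec m r M z \<and> Q z)) \<longleftrightarrow>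
         (mvec m m Pinv x \<in> vecs r \<and> Q (mvec m m Pinv x))"
proof
  assume "x \<in> colspace m r M \<and> (\<exists>z\<in>vecs r. x = mvec m r M z \<and> Q z)"
  then obtain z where z: "z \<in> vecs r" "x = mvec m r M z" "Q z" by blast
  then have "mvec m m Pinv x = z"
    using mvec_Pm_vecs[OF z(1)] Pinv_Pm[OF vecs_mono[OF z(1) r_le_m]] by simp
  then show "mvec m m Pinv x \<in> vecs r \<and> Q (mvec m m Pinv x)" using z by simp
next
  assume h: "mvec m m Pinv x \<in> vecs r \<and> Q (mvec m m Pinv x)"
  then have "x = mvec m r M (mvec m m Pinv x)" using Pm_Pinv[OF x] mvec_Pm_vecs by simp
  then show "x \<in> colspace m r M \<and> (\<exists>z\<in>vecs r. x = mvec m r M z \<and> Q z)"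
    using h unfolding colspace_def by blast
qed

subsection \<open>The form w^dagger E(x, y) w\<close>

lemma bssc_Pm: "c \<in> vecs m \<Longrightarrow> bssc m r M piv S b (mvec m m Pm c) = chirp_coord m r S b c"
  by (simp add: bssc_def chirp_coord_def quad_def minv_Pm Pinv_Pm power_add power_i_double_lift_sum)

lemma bij_betw_Pm: "bij_betw (mvec m m Pm) (vecs m) (vecs m)"
  by (rule bij_betw_byWitness[where f' = "mvec m m Pinv"]) (auto simp: Pm_Pinv Pinv_Pm)

lemma qform_bssc_Emat:
  assumes x: "x \<in> vecs m" and y: "y \<in> vecs m"
  defines "x' \<equiv> mvec m m Pinv x"
  shows "qform m (bssc m r M piv S b) (Emat m x y) = \<i> ^ (\<Sum>i<m. lift (x i) * lift (y i)) *
     (\<Sum>c\<in>vecs m. cnj (chirp_coord m r S b c)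
                    * (chi m y (mvec m m Pm (vadd c x')) * chirp_coord m r S b (vadd c x')))"
proof -
  let ?w = "bssc m r M piv S b"
  let ?g = "\<lambda>u. cnj (?w u) * (chi m y (vadd u x) * ?w (vadd u x))"
  have "(\<Sum>u\<in>vecs m. ?g u) = (\<Sum>c\<in>vecs m. ?g (mvec m m Pm c))"
    by (rule sum.reindex_bij_betw[OF bij_betw_Pm, symmetric])
  also have "\<dots> = (\<Sum>c\<in>vecs m. cnj (chirp_coord m r S b c)
                    * (chi m y (mvec m m Pm (vadd c x')) * chirp_coord m r S b (vadd c x')))"
  proof (rule sum.cong[OF refl])
    fix c assume c: "c \<in> vecs m"
    have "vadd (mvec m m Pm c) x = mvec m m Pm (vadd c x')"
      by (simp add: x'_def mvec_vadd Pm_Pinv[OF x])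
    then show "?g (mvec m m Pm c) = cnj (chirp_coord m r S b c)
                    * (chi m y (mvec m m Pm (vadd c x')) * chirp_coord m r S b (vadd c x'))"
      using c by (simp add: bssc_Pm vadd_in_vecs x'_def)
  qed
  finally show ?thesis using qform_Emat[OF x y] by simp
qed

lemma qform_bssc_Emat_nonzero_iff:
  assumes sym: "\<forall>j<r. \<forall>k<r. S j k = S k j" and x: "x \<in> vecs m" and y: "y \<in> vecs m"
  shows "qform m (bssc m r M piv S b) (Emat m x y) \<noteq> 0 \<longleftrightarrow>
     mvec m m Pinv x \<in> vecs r \<and> mvec r m (mtrans M) y = mvec r r S (mvec m m Pinv x)"
proof (cases "mvec m m Pinv x \<in> vecs r")
  case False
  then show ?thesis
    unfolding qform_bssc_Emat[OF x y] by (simp add: chirp_coord_summand_eq_0)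
next
  case True
  let ?x = "mvec m m Pinv x"
  let ?e = "vadd (mvec r r S ?x) (mvec m m (mtrans Pm) y)"
  let ?s = "complex_of_real (2 powr (- real r / 2))"
  let ?P = "\<Prod>j<m. coord_factor r b ?e j 0 + coord_factor r b ?e j 1"
  let ?K = "?s * ?s * \<i> ^ quad r S ?x * chi m y (mvec m m Pm ?x) * chi m b ?x"
  have "(\<Sum>c\<in>vecs m. cnj (chirp_coord m r S b c)
            * (chi m y (mvec m m Pm (vadd c ?x)) * chirp_coord m r S b (vadd c ?x)))
      = (\<Sum>c\<in>vecs m. ?K * (\<Prod>j<m. coord_factor r b ?e j (c j)))"
    by (intro sum.cong refl chirp_coord_summand[OF sym r_le_m True])
  also have "\<dots> = ?K * ?P"
    by (simp only: sum_distrib_left[symmetric] sum_vecs_prod)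
  finally have "qform m (bssc m r M piv S b) (Emat m x y)
      = \<i> ^ (\<Sum>i<m. lift (x i) * lift (y i)) * (?K * ?P)"
    by (simp only: qform_bssc_Emat[OF x y])
  then have "qform m (bssc m r M piv S b) (Emat m x y) \<noteq> 0 \<longleftrightarrow> ?P \<noteq> 0"
    by simp
  also have "\<dots> \<longleftrightarrow> (\<forall>j<r. ?e j = 0)"
    by (rule prod_coord_factor_nonzero_iff[OF r_le_m])
  also have "\<dots> \<longleftrightarrow> (\<forall>j<r. mvec r r S ?x j = mvec r m (mtrans M) y j)"
    by (simp add: vadd_def bit_add_eq_0_iff mvec_mtrans_Pm_less)
  also have "\<dots> \<longleftrightarrow> mvec r m (mtrans M) y = mvec r r S ?x"
    by (auto intro!: vecs_eqI[OF mvec_in_vecs mvec_in_vecs])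
  finally show ?thesis using True by simp
qed

end

theorem mainTheorem6:
  fixes m r :: nat and M S :: "nat \<Rightarrow> nat \<Rightarrow> bit" and piv :: "nat \<Rightarrow> nat"
    and H :: "(nat \<Rightarrow> bit) set" and b :: "nat \<Rightarrow> bit"
  assumes "1 \<le> m"
    and "cref m r M piv"
    and "H = colspace m r M"
    and "\<forall>j<r. \<forall>k<r. S j k = S k j"
    and "b \<in> vecs m"
  shows
    "(\<forall>x\<in>vecs m. \<forall>y\<in>vecs m.
        (qform m (bssc m r M piv S b) (Emat m x y) \<noteq> 0) \<longleftrightarrow>
          (x \<in> H \<and> (\<exists>z\<in>vecs r. x = mvec m r M z \<and>
                mvec r m (mtrans M) y = mvec r r S z)))
   \<and> (\<forall>x\<in>vecs m. \<forall>y\<in>vecs m.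
        (qform m (bssc m r M piv S b) (Emat m x y) \<noteq> 0) \<longleftrightarrow>
          (x \<in> H \<and> (\<exists>z\<in>vecs r. x = mvec m r M z \<and>
                y \<in> {vadd (mvec m (m - r) (Htil m r M piv) v) (mvec m r (IImat m r piv) (mvec r r S z))
                      | v. v \<in> vecs (m - r)})))
   \<and> (\<forall>y\<in>vecs m.
        (qform m (bssc m r M piv S b) (Emat m (\<lambda>_. 0) y) \<noteq> 0) \<longleftrightarrow>
          y \<in> colspace m (m - r) (Htil m r M piv))
   \<and> colspace m (m - r) (Htil m r M piv) = perp m H"
proof -
  interpret cref_matrix m r M piv by (rule cref_matrix.intro) fact
  note nonzero_iff = qform_bssc_Emat_nonzero_iff[OF assms(4)]
  have coords: "qform m (bssc m r M piv S b) (Emat m x y) \<noteq> 0 \<longleftrightarrow>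
      (x \<in> H \<and> (\<exists>z\<in>vecs r. x = mvec m r M z \<and> mvec r m (mtrans M) y = mvec r r S z))"
    if "x \<in> vecs m" "y \<in> vecs m" for x y
    unfolding nonzero_iff[OF that] assms(3) colspace_M_iff[OF that(1)] ..
  have coset: "mvec r m (mtrans M) y = mvec r r S z \<longleftrightarrow>
      y \<in> {vadd (mvec m (m - r) Ht v) (mvec m r II (mvec r r S z)) | v. v \<in> vecs (m - r)}"
    if "y \<in> vecs m" for y z
    using mvec_mtrans_M_eq_iff[OF that mvec_in_vecs] by blast
  have "qform m (bssc m r M piv S b) (Emat m (\<lambda>_. 0) y) \<noteq> 0 \<longleftrightarrow> y \<in> colspace m (m - r) Ht"
    if "y \<in> vecs m" for y
    using nonzero_iff[OF zero_in_vecs that] that by (simp add: colspace_Htil)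
  then show ?thesis
    using coords coset by (simp add: assms(3) colspace_Htil perp_colspace)
qed

end
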